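(* The message-passing axiom fails for $TS_{PP}$ (and hence for PSO): let $x\neq y$ be global variables, $t=1$, $t'=2$ two distinct threads, $a_w=wr(y,1)$, $a_r=rd(y,r_1,1)$, $b=wr(x,1)$ (so $\mathit{var}(a_w)=\mathit{var}(a_r)\neq\mathit{var}(b)$, $wrval(a_w)=rdval(a_r)$). Then $$\mathit{vmax}_{PP}(t,b)\cap\mathrm{wlp}(T_{PP}(t',a_r),\mathit{vmax}_{PP}(t',b))\not\subseteq\mathrm{wlp}(T_{PP}(t,a_w),\mathrm{wlp}(T_{PP}(t',a_r),\mathit{vmax}_{PP}(t',b))).$$ In particular the axiom MP — for all $a_w,a_r,b$ and $t\neq t'$ with $(a_w,a_r)\in sync$, $\mathit{var}(a_w)=\mathit{var}(a_r)\neq\mathit{var}(b)$, $wrval(a_w)=rdval(a_r)$: $\mathit{vmax}(t,b)\cap\mathrm{wlp}(T(t',a_r),\mathit{vmax}(t',b))\subseteq\mathrm{wlp}(T(t,a_w),\mathrm{wlp}(T(t',a_r),\mathit{vmax}(t',b)))$ — does not hold for any relation $sync$ containing the pair $(wr(y,1),rd(y,r_1,1))$.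
   Context: PPSO: threads $\mathsf{Tid}$, global variables $\mathsf{Var_G}$, values $\mathsf{Val}$ (containing $0,1$). States $\sigma=(s,wb)$ with $s:\mathsf{Var_G}\to\mathsf{Val}$ and $wb:(\mathsf{Tid}\times\mathsf{Var_G})\to(\mathsf{Val}\times\mathbb{Q})^*$; entries $(v,q)$, timestamp $ts(v,q)=q$. $val_\sigma(t,x)$: value of the last entry of $wb^{t,x}$ if nonempty, else $s(x)$. Steps: $rd(x,r,v)$ by $t$ leaves $\sigma$ unchanged, requires $v=val_\sigma(t,x)$; $fence$ by $t$ leaves $\sigma$ unchanged, requires all $wb^{t,x}$ empty; $wr(x,v)$ by $t$ appends $(v,q)$ to $wb^{t,x}$ for a $q$ occurring in no buffer and exceeding all timestamps in $wb^{t,x}$; a flush by $t$ removes the first entry $(v,q)$ of some $wb^{t,x}$ and sets $s(x):=v$, allowed only if all entries of all other buffers $wb^{t',x'}$, $(t',x')\neq(t,x)$, have timestamps $>q$. $T_{PP}(t,a)$ = any finite sequence of flushes (by any threads) followed by the step of $a$ by $t$. $\mathrm{wlp}(R,P)=\{\sigma\mid\forall\sigma':(\sigma,\sigma')\in R\Rightarrow\sigma'\in P\}$. $maxTS(t,x)=\{\sigma\mid\sigma.wb^{t,x}\neq\langle\rangle\wedge\forall t',q:((\cdot,q)\in\sigma.wb^{t',x}\Rightarrow ts(last(\sigma.wb^{t,x}))\geq q)\}\cup\{\sigma\mid\forall t':\sigma.wb^{t',x}=\langle\rangle\}$; $\mathit{vmax}_{PP}(t,a)=maxTS(t,\mathit{var}(a))$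 for reads and writes $a$, and $\Sigma_{PP}$ for $a=fence$. $\mathit{var}$, $wrval$, $rdval$ give the variable, written value, read value of an action. *)

theory Defs
  imports Main "HOL.Rat"
begin

type_synonym tid = nat

datatype ('var, 'reg, 'val) act =
    Rd 'var 'reg 'val
  | Wr 'var 'val
  | Fence

fun var :: "('var, 'reg, 'val) act \<Rightarrow> 'var" where
  "var (Rd x r v) = x"
| "var (Wr x v) = x"
| "var Fence = undefined"

fun wrval :: "('var, 'reg, 'val) act \<Rightarrow> 'val" where
  "wrval (Wr x v) = v"
| "wrval _ = undefined"

fun rdval :: "('var, 'reg, 'val) act \<Rightarrow> 'val" where
  "rdval (Rd x r v) = v"
| "rdval _ = undefined"

record ('var, 'val) pstate =
  sh :: "'var \<Rightarrow> 'val"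
  wb :: "tid \<times> 'var \<Rightarrow> ('val \<times> rat) list"

definition ts :: "'val \<times> rat \<Rightarrow> rat" where
  "ts e = snd e"

definition valS :: "('var, 'val) pstate \<Rightarrow> tid \<Rightarrow> 'var \<Rightarrow> 'val" where
  "valS \<sigma> t x = (if wb \<sigma> (t, x) \<noteq> [] then fst (last (wb \<sigma> (t, x))) else sh \<sigma> x)"

fun step :: "tid \<Rightarrow> ('var, 'reg, 'val) act \<Rightarrow> (('var, 'val) pstate \<times> ('var, 'val) pstate) set" where
  "step t (Rd x r v) = {(\<sigma>, \<sigma>'). \<sigma>' = \<sigma> \<and> v = valS \<sigma> t x}"
| "step t Fence = {(\<sigma>, \<sigma>'). \<sigma>' = \<sigma> \<and> (\<forall>x. wb \<sigma> (t, x) = [])}"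
| "step t (Wr x v) = {(\<sigma>, \<sigma>'). \<exists>q.
      (\<forall>t' x'. \<forall>e \<in> set (wb \<sigma> (t', x')). ts e \<noteq> q) \<and>
      (\<forall>e \<in> set (wb \<sigma> (t, x)). ts e < q) \<and>
      \<sigma>' = \<sigma>\<lparr>wb := (wb \<sigma>)((t, x) := wb \<sigma> (t, x) @ [(v, q)])\<rparr>}"

definition flush :: "tid \<Rightarrow> 'var \<Rightarrow> (('var, 'val) pstate \<times> ('var, 'val) pstate) set" where
  "flush t x = {(\<sigma>, \<sigma>'). \<exists>v q rest. wb \<sigma> (t, x) = (v, q) # rest \<and>
      (\<forall>t' x'. (t', x') \<noteq> (t, x) \<longrightarrow> (\<forall>e \<in> set (wb \<sigma> (t', x')). ts e > q)) \<and>
      \<sigma>' = \<sigma>\<lparr>sh := (sh \<sigma>)(x := v), wb := (wb \<sigma>)((t, x) := rest)\<rparr>}"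

definition anyFlush :: "(('var, 'val) pstate \<times> ('var, 'val) pstate) set" where
  "anyFlush = (\<Union>t x. flush t x)"

definition T_PP :: "tid \<Rightarrow> ('var, 'reg, 'val) act \<Rightarrow> (('var, 'val) pstate \<times> ('var, 'val) pstate) set" where
  "T_PP t a = anyFlush\<^sup>* O step t a"

definition wlp :: "('s \<times> 's) set \<Rightarrow> 's set \<Rightarrow> 's set" where
  "wlp R P = {\<sigma>. \<forall>\<sigma>'. (\<sigma>, \<sigma>') \<in> R \<longrightarrow> \<sigma>' \<in> P}"

definition maxTS :: "tid \<Rightarrow> 'var \<Rightarrow> ('var, 'val) pstate set" where
  "maxTS t x = {\<sigma>. wb \<sigma> (t, x) \<noteq> [] \<and>
        (\<forall>t' q. (\<exists>v. (v, q) \<in> set (wb \<sigma> (t', x))) \<longrightarrow> ts (last (wb \<sigma> (t, x))) \<ge> q)}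
     \<union> {\<sigma>. \<forall>t'. wb \<sigma> (t', x) = []}"

fun vmax_PP :: "tid \<Rightarrow> ('var, 'reg, 'val) act \<Rightarrow> ('var, 'val) pstate set" where
  "vmax_PP t Fence = UNIV"
| "vmax_PP t a = maxTS t (var a)"

definition MP_axiom ::
  "(tid \<Rightarrow> ('var, 'reg, 'val) act \<Rightarrow> ('s \<times> 's) set) \<Rightarrow>
   (tid \<Rightarrow> ('var, 'reg, 'val) act \<Rightarrow> 's set) \<Rightarrow>
   (('var, 'reg, 'val) act \<times> ('var, 'reg, 'val) act) set \<Rightarrow> bool" where
  "MP_axiom T vmax sync =
    (\<forall>aw ar b t t'. t \<noteq> t' \<and> (aw, ar) \<in> sync \<and> var aw = var ar \<and> var ar \<noteq> var b
        \<and> wrval aw = rdval ar \<longrightarrow>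
       vmax t b \<inter> wlp (T t' ar) (vmax t' b) \<subseteq> wlp (T t aw) (wlp (T t' ar) (vmax t' b)))"

end

theory Submission
  imports Defs
begin

text \<open>
  Thread 1 has the write x := 1 (timestamp 1) pending in its buffer while all memory is 0.
  It then writes y := 1 with the smaller timestamp 0, which partial store ordering lets it
  flush before x. Thread 2 can now read y = 1 and still not see the latest write to x.
  Before the write to y the read of y = 1 is impossible, so the premise of MP holds vacuously.
\<close>

lemma rtrancl_anyFlush_untouched_var:
  assumes "(\<sigma>, \<sigma>') \<in> anyFlush\<^sup>*" "sh \<sigma> y = v" "\<forall>t. wb \<sigma> (t, y) = []"
  shows "sh \<sigma>' y = v \<and> (\<forall>t. wb \<sigma>' (t, y) = [])"
  using assms
proof (induction rule: rtrancl_induct)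
  case base
  then show ?case by simp
next
  case (step \<rho> \<rho>')
  then obtain t z where "(\<rho>, \<rho>') \<in> flush t z"
    by (auto simp: anyFlush_def)
  then obtain u q rest where buf: "wb \<rho> (t, z) = (u, q) # rest"
    and \<rho>': "\<rho>' = \<rho>\<lparr>sh := (sh \<rho>)(z := u), wb := (wb \<rho>)((t, z) := rest)\<rparr>"
    by (auto simp: flush_def)
  from step buf have "z \<noteq> y" by auto
  with step \<rho>' show ?case by auto
qed

lemma wlp_T_PP_Rd_unreadable:
  assumes "sh \<sigma> y \<noteq> v" "\<forall>t. wb \<sigma> (t, y) = []"
  shows "\<sigma> \<in> wlp (T_PP t (Rd y r v)) P"
proof -
  have False if "(\<sigma>, \<sigma>') \<in> T_PP t (Rd y r v)" for \<sigma>'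
  proof -
    from that obtain \<rho> where flushes: "(\<sigma>, \<rho>) \<in> anyFlush\<^sup>*" and "v = valS \<rho> t y"
      by (auto simp: T_PP_def)
    moreover have "sh \<rho> y = sh \<sigma> y \<and> (\<forall>t. wb \<rho> (t, y) = [])"
      using rtrancl_anyFlush_untouched_var[OF flushes refl assms(2)] .
    ultimately show False
      using assms(1) by (simp add: valS_def)
  qed
  then show ?thesis
    by (auto simp: wlp_def)
qed

lemma not_MP_axiomI:
  assumes "t \<noteq> t'" "(aw, ar) \<in> sync" "var aw = var ar" "var ar \<noteq> var b" "wrval aw = rdval ar"
    and "\<not> vmax t b \<inter> wlp (T t' ar) (vmax t' b) \<subseteq> wlp (T t aw) (wlp (T t' ar) (vmax t' b))"
  shows "\<not> MP_axiom T vmax sync"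
  using assms unfolding MP_axiom_def by blast

definition mp_initial :: "'var \<Rightarrow> ('var, 'val::zero_neq_one) pstate" where
  "mp_initial x = \<lparr>sh = (\<lambda>_. 0), wb = (\<lambda>_. [])((1, x) := [(1, 1)])\<rparr>"

definition mp_written :: "'var \<Rightarrow> 'var \<Rightarrow> ('var, 'val::zero_neq_one) pstate" where
  "mp_written x y = \<lparr>sh = (\<lambda>_. 0), wb = (\<lambda>_. [])((1, x) := [(1, 1)], (1, y) := [(1, 0)])\<rparr>"

definition mp_flushed :: "'var \<Rightarrow> 'var \<Rightarrow> ('var, 'val::zero_neq_one) pstate" where
  "mp_flushed x y = \<lparr>sh = (\<lambda>_. 0)(y := 1), wb = (\<lambda>_. [])((1, x) := [(1, 1)])\<rparr>"

lemma mp_initial_maxTS: "mp_initial x \<in> maxTS 1 x"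
  by (auto simp: mp_initial_def maxTS_def ts_def)

lemma mp_initial_write:
  assumes "x \<noteq> y"
  shows "(mp_initial x, mp_written x y) \<in> T_PP 1 (Wr y 1)"
  unfolding T_PP_def
proof (rule relcompI[OF rtrancl_refl])
  show "(mp_initial x, mp_written x y) \<in> step 1 (Wr y 1)"
    using assms by (auto simp: mp_initial_def mp_written_def ts_def intro!: exI[of _ 0])
qed

lemma mp_written_flush:
  assumes "x \<noteq> y"
  shows "(mp_written x y, mp_flushed x y) \<in> flush 1 y"
  unfolding flush_def using assms
  by (auto simp: mp_written_def mp_flushed_def ts_def fun_eq_iff intro!: exI[of _ 1] exI[of _ 0])

lemma mp_written_read:
  assumes "x \<noteq> y"
  shows "(mp_written x y, mp_flushed x y) \<in> T_PP 2 (Rd y r 1)"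
  unfolding T_PP_def
proof (rule relcompI[OF r_into_rtrancl])
  show "(mp_written x y, mp_flushed x y) \<in> anyFlush"
    using mp_written_flush[OF assms] by (auto simp: anyFlush_def)
  show "(mp_flushed x y, mp_flushed x y) \<in> step 2 (Rd y r 1)"
    by (simp add: mp_flushed_def valS_def)
qed

lemma mp_flushed_not_maxTS: "mp_flushed x y \<notin> maxTS 2 x"
  by (auto simp: mp_flushed_def maxTS_def)

lemma MP_instance_fails_PP:
  fixes x y :: 'var and r :: 'reg
  assumes "x \<noteq> y"
  defines "P \<equiv> wlp (T_PP 2 (Rd y r 1)) (vmax_PP 2 (Wr x 1 :: ('var, 'reg, 'val::zero_neq_one) act))"
  shows "\<not> vmax_PP 1 (Wr x 1 :: ('var, 'reg, 'val) act) \<inter> P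
            \<subseteq> wlp (T_PP 1 (Wr y 1 :: ('var, 'reg', 'val) act)) P"
proof
  assume incl: "vmax_PP 1 (Wr x 1 :: ('var, 'reg, 'val) act) \<inter> P
                  \<subseteq> wlp (T_PP 1 (Wr y 1 :: ('var, 'reg', 'val) act)) P"
  have "mp_initial x \<in> P"
    unfolding P_def using assms(1) by (intro wlp_T_PP_Rd_unreadable) (auto simp: mp_initial_def)
  moreover have "mp_initial x \<in> vmax_PP 1 (Wr x 1 :: ('var, 'reg, 'val) act)"
    using mp_initial_maxTS by simp
  ultimately have "mp_initial x \<in> wlp (T_PP 1 (Wr y 1 :: ('var, 'reg', 'val) act)) P"
    using incl by blast
  with mp_initial_write[OF assms(1)] have "mp_written x y \<in> P"
    by (auto simp: wlp_def)
  moreover have "(mp_written x y, mp_flushed x y) \<in> T_PP 2 (Rd y r (1::'val))"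
    using mp_written_read[OF assms(1)] .
  ultimately have "(mp_flushed x y :: ('var, 'val) pstate) \<in> maxTS 2 x"
    by (auto simp: P_def wlp_def)
  moreover have "(mp_flushed x y :: ('var, 'val) pstate) \<notin> maxTS 2 x"
    by (rule mp_flushed_not_maxTS)
  ultimately show False
    by contradiction
qed

theorem mainTheorem5:
  fixes x y :: 'var and r1 :: 'reg
  assumes "x \<noteq> y"
  shows "\<not> (vmax_PP 1 (Wr x (1::'val::zero_neq_one) :: ('var,'reg,'val) act)
              \<inter> wlp (T_PP 2 (Rd y r1 1)) (vmax_PP 2 (Wr x 1 :: ('var,'reg,'val) act))
            \<subseteq> wlp (T_PP 1 (Wr y 1))
                  (wlp (T_PP 2 (Rd y r1 1)) (vmax_PP 2 (Wr x 1 :: ('var,'reg,'val) act))))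
     \<and> (\<forall>sync. (Wr y 1, Rd y r1 (1::'val)) \<in> sync \<longrightarrow>
          \<not> MP_axiom (T_PP :: tid \<Rightarrow> ('var,'reg,'val) act \<Rightarrow> _) vmax_PP sync)"
proof -
  note fails = MP_instance_fails_PP[OF assms, of r1]
  have "\<not> MP_axiom T_PP vmax_PP sync" if "(Wr y 1, Rd y r1 (1::'val)) \<in> sync" for sync
    using that assms fails[where 'reg' = 'reg]
    by (intro not_MP_axiomI[where t = 1 and t' = 2 and aw = "Wr y 1" and ar = "Rd y r1 1"
          and b = "Wr x 1"]) auto
  with fails show ?thesis
    by blast
qed

end
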